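(* Let $G_1,\dots,G_k$ be connected graphs, each with at least $2$ vertices. Then $$\gamma(G_1\times G_2\times\cdots\times G_k)=\frac{1}{\sum_{i=1}^k \frac{1}{\gamma(G_i)}}.$$
   Context: For a finite simple undirected graph $G$ with $n$ vertices, let $\mathcal{F}=\{x\in\mathbb{R}^{V(G)} : \sum_{v} x_v = 0,\ \|x\|_\infty = 1\}$, for $x\in\mathcal{F}$ let $\gamma_x(G)=\max_{uv\in E(G)}|x_u-x_v|$, and $\gamma(G)=\min_{x\in\mathcal{F}}\gamma_x(G)$. The Cartesian product $G_1\times\cdots\times G_k$ has vertex set $V(G_1)\times\cdots\times V(G_k)$, with $(u_1,\dots,u_k)\sim(v_1,\dots,v_k)$ iff there is exactly one index $i$ with $u_i\sim v_i$ in $G_i$ and $u_j=v_j$ for all $j\ne i$. *)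

theory Defs
  imports "HOL-Library.FuncSet" Complex_Main
begin

definition simple_graph :: "'a set \<Rightarrow> ('a \<Rightarrow> 'a \<Rightarrow> bool) \<Rightarrow> bool" where
  "simple_graph V E \<longleftrightarrow> finite V \<and> (\<forall>u v. E u v \<longrightarrow> u \<in> V \<and> v \<in> V)
     \<and> (\<forall>u v. E u v \<longrightarrow> E v u) \<and> (\<forall>v. \<not> E v v)"

definition connected_graph :: "'a set \<Rightarrow> ('a \<Rightarrow> 'a \<Rightarrow> bool) \<Rightarrow> bool" where
  "connected_graph V E \<longleftrightarrow> (\<forall>u\<in>V. \<forall>v\<in>V. E\<^sup>*\<^sup>* u v)"

definition sup_norm :: "'a set \<Rightarrow> ('a \<Rightarrow> real) \<Rightarrow> real" where
  "sup_norm V x = Max ((\<lambda>v. \<bar>x v\<bar>) ` V)"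

definition feasible :: "'a set \<Rightarrow> ('a \<Rightarrow> real) set" where
  "feasible V = {x. (\<Sum>v\<in>V. x v) = 0 \<and> sup_norm V x = 1}"

definition gamma_x :: "'a set \<Rightarrow> ('a \<Rightarrow> 'a \<Rightarrow> bool) \<Rightarrow> ('a \<Rightarrow> real) \<Rightarrow> real" where
  "gamma_x V E x = Max ({0} \<union> {\<bar>x u - x v\<bar> | u v. u \<in> V \<and> v \<in> V \<and> E u v})"

text \<open>gamma(G) = min over feasible x (the minimum is attained; we write it as Inf).\<close>
definition gamma :: "'a set \<Rightarrow> ('a \<Rightarrow> 'a \<Rightarrow> bool) \<Rightarrow> real" where
  "gamma V E = Inf (gamma_x V E ` feasible V)"

text \<open>Cartesian product of graphs (V i, E i), i < k. Vertices are k-tuples, i.e.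
  extensional functions on {..<k}.\<close>
definition prod_vertices :: "nat \<Rightarrow> (nat \<Rightarrow> 'a set) \<Rightarrow> (nat \<Rightarrow> 'a) set" where
  "prod_vertices k V = PiE {..<k} V"

definition prod_edges :: "nat \<Rightarrow> (nat \<Rightarrow> 'a set) \<Rightarrow> (nat \<Rightarrow> 'a \<Rightarrow> 'a \<Rightarrow> bool)
    \<Rightarrow> (nat \<Rightarrow> 'a) \<Rightarrow> (nat \<Rightarrow> 'a) \<Rightarrow> bool" where
  "prod_edges k V E x y \<longleftrightarrow> x \<in> prod_vertices k V \<and> y \<in> prod_vertices k V \<and>
     (\<exists>i<k. E i (x i) (y i) \<and> (\<forall>j<k. j \<noteq> i \<longrightarrow> x j = y j))"

end

theory Submission
  imports Defs
begin

(* Lower bound: averaging a function on the product over one coordinate i never increases its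
   largest edge difference t and moves each value by at most t/gamma(G_i), since on a fibre the
   deviation of a function from its mean is at most its largest edge difference over gamma(G_i)
   (gamma is homogeneous). Averaging a feasible x over all k coordinates in turn yields its mean 0,
   so at a vertex u with |x u| = 1 we get 1 <= t * (sum_i 1/gamma(G_i)).
   Upper bound: take nearly optimal y_i on G_i, normalised by y_i(v_i) = 1, and put
   x(u) = sum_i lambda_i * y_i(u_i) with lambda_i proportional to 1/gamma_x(y_i). An edge of the
   product changes one coordinate i only, so x changes by at most lambda_i * gamma_x(y_i), which is
   the same number 1/(sum_i 1/gamma_x(y_i)) for every i. *)

section \<open>The parameter gamma of a single graph\<close>

lemma sup_norm_ge: "finite V \<Longrightarrow> v \<in> V \<Longrightarrow> \<bar>x v\<bar> \<le> sup_norm V x"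
  unfolding sup_norm_def by auto

lemma sup_norm_le:
  "finite V \<Longrightarrow> V \<noteq> {} \<Longrightarrow> (\<And>v. v \<in> V \<Longrightarrow> \<bar>x v\<bar> \<le> t) \<Longrightarrow> sup_norm V x \<le> t"
  unfolding sup_norm_def by (subst Max_le_iff) auto

lemma sup_norm_attained: "finite V \<Longrightarrow> V \<noteq> {} \<Longrightarrow> \<exists>v\<in>V. \<bar>x v\<bar> = sup_norm V x"
proof -
  assume "finite V" "V \<noteq> {}"
  then have "Max ((\<lambda>v. \<bar>x v\<bar>) ` V) \<in> (\<lambda>v. \<bar>x v\<bar>) ` V"
    by (intro Max_in) auto
  then show ?thesis
    unfolding sup_norm_def by auto
qed

lemma finite_gamma_x_values:
  "finite V \<Longrightarrow> finite ({0} \<union> {\<bar>x u - x v\<bar> | u v. u \<in> V \<and> v \<in> V \<and> E u v})"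
proof -
  assume "finite V"
  moreover have "{\<bar>x u - x v\<bar> | u v. u \<in> V \<and> v \<in> V \<and> E u v}
      \<subseteq> (\<lambda>(u, v). \<bar>x u - x v\<bar>) ` (V \<times> V)"
    by auto
  ultimately show ?thesis
    by (simp add: finite_subset)
qed

lemma gamma_x_ge: "finite V \<Longrightarrow> u \<in> V \<Longrightarrow> v \<in> V \<Longrightarrow> E u v \<Longrightarrow> \<bar>x u - x v\<bar> \<le> gamma_x V E x"
  unfolding gamma_x_def by (rule Max_ge[OF finite_gamma_x_values]) auto

lemma gamma_x_nonneg: "finite V \<Longrightarrow> 0 \<le> gamma_x V E x"
  unfolding gamma_x_def by (rule Max_ge[OF finite_gamma_x_values]) auto

lemma gamma_x_le:
  "finite V \<Longrightarrow> 0 \<le> t \<Longrightarrow> (\<And>u v. u \<in> V \<Longrightarrow> v \<in> V \<Longrightarrow> E u v \<Longrightarrow> \<bar>x u - x v\<bar> \<le> t)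
    \<Longrightarrow> gamma_x V E x \<le> t"
  unfolding gamma_x_def by (subst Max_le_iff[OF finite_gamma_x_values]) auto

lemma gamma_x_uminus: "gamma_x V E (\<lambda>v. - x v) = gamma_x V E x"
proof -
  have "\<bar>- x u - - x v\<bar> = \<bar>x u - x v\<bar>" for u v
    by linarith
  then show ?thesis
    unfolding gamma_x_def by simp
qed

lemma gamma_x_diff_const: "gamma_x V E (\<lambda>v. x v - c) = gamma_x V E x"
  unfolding gamma_x_def by simp

lemma feasible_uminus: "x \<in> feasible V \<Longrightarrow> (\<lambda>v. - x v) \<in> feasible V"
  by (simp add: feasible_def sup_norm_def sum_negf)

lemma feasible_nonempty:
  assumes "2 \<le> card V"
  shows "feasible V \<noteq> {}"
proof -
  have fin: "finite V"
    using assms by (metis card.infinite not_numeral_le_zero)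
  obtain a b where ab: "a \<in> V" "b \<in> V" "a \<noteq> b"
    using assms card_le_Suc0_iff_eq[OF fin] by (metis not_less_eq_eq numeral_2_eq_2)
  define x where "x v = (if v = a then 1 else if v = b then -1 else 0 :: real)" for v
  have "(\<Sum>v\<in>V. x v) = (\<Sum>v\<in>{a, b}. x v)"
    by (rule sum.mono_neutral_right) (use fin ab in \<open>auto simp: x_def\<close>)
  then have "(\<Sum>v\<in>V. x v) = 0"
    using ab by (simp add: x_def)
  moreover have "sup_norm V x = 1"
  proof (rule antisym)
    show "sup_norm V x \<le> 1"
      by (rule sup_norm_le) (use fin ab in \<open>auto simp: x_def\<close>)
    show "1 \<le> sup_norm V x"
      using sup_norm_ge[OF fin ab(1), of x] by (simp add: x_def)
  qed
  ultimately show ?thesis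
    unfolding feasible_def by blast
qed

lemma feasible_spread:
  assumes fin: "finite V" and ne: "V \<noteq> {}" and x: "x \<in> feasible V"
  shows "\<exists>v\<in>V. \<exists>w\<in>V. 1 \<le> \<bar>x v - x w\<bar>"
proof -
  have sum0: "(\<Sum>v\<in>V. x v) = 0" and norm1: "sup_norm V x = 1"
    using x by (auto simp: feasible_def)
  obtain v where v: "v \<in> V" "\<bar>x v\<bar> = 1"
    using sup_norm_attained[OF fin ne, of x] norm1 by auto
  have "\<exists>w\<in>V. x v * x w \<le> 0"
  proof (rule ccontr)
    assume "\<not> ?thesis"
    then have "0 < (\<Sum>w\<in>V. x v * x w)"
      using fin ne by (intro sum_pos) auto
    with sum0 show False
      by (simp add: sum_distrib_left[symmetric])
  qed
  then obtain w where "w \<in> V" "x v * x w \<le> 0"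
    by blast
  with v have "1 \<le> \<bar>x v - x w\<bar>"
    by (cases "x v = 1") (auto simp: abs_if mult_le_0_iff split: if_splits)
  with v \<open>w \<in> V\<close> show ?thesis
    by blast
qed

lemma gamma_le_gamma_x: "finite V \<Longrightarrow> x \<in> feasible V \<Longrightarrow> gamma V E \<le> gamma_x V E x"
  unfolding gamma_def by (rule cInf_lower) (auto intro!: bdd_belowI2[where m = 0] gamma_x_nonneg)

lemma le_gamma:
  "feasible V \<noteq> {} \<Longrightarrow> (\<And>x. x \<in> feasible V \<Longrightarrow> c \<le> gamma_x V E x) \<Longrightarrow> c \<le> gamma V E"
  unfolding gamma_def by (rule cInf_greatest) auto

lemma gamma_less_imp_normalized_witness:
  assumes fin: "finite V" and ne: "V \<noteq> {}" and feas: "feasible V \<noteq> {}" and less: "gamma V E < c"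
  shows "\<exists>x\<in>feasible V. gamma_x V E x < c \<and> (\<exists>v\<in>V. x v = 1)"
proof -
  obtain y where y: "y \<in> feasible V" "gamma_x V E y < c"
    using cInf_lessD[of "gamma_x V E ` feasible V" c] feas less by (auto simp: gamma_def)
  obtain v where v: "v \<in> V" "\<bar>y v\<bar> = 1"
    using sup_norm_attained[OF fin ne, of y] y(1) by (auto simp: feasible_def)
  show ?thesis
  proof (cases "y v = 1")
    case True
    with y v show ?thesis
      by blast
  next
    case False
    with v have "- y v = 1"
      by linarith
    with y v feasible_uminus[OF y(1)] show ?thesis
      by (metis gamma_x_uminus)
  qed
qed

lemma gamma_mult_sup_norm_le:
  assumes fin: "finite V" and ne: "V \<noteq> {}" and sum0: "(\<Sum>v\<in>V. y v) = 0"
  shows "gamma V E * sup_norm V y \<le> gamma_x V E y"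
proof -
  define M where "M = sup_norm V y"
  obtain v0 where v0: "v0 \<in> V" "\<bar>y v0\<bar> = M"
    using sup_norm_attained[OF fin ne] unfolding M_def by blast
  show ?thesis
  proof (cases "M = 0")
    case True
    then show ?thesis
      using gamma_x_nonneg[OF fin] by (simp add: M_def)
  next
    case False
    with v0 have M: "0 < M"
      by linarith
    define z where "z v = y v / M" for v
    have "(\<Sum>v\<in>V. z v) = 0"
      unfolding z_def using sum0 by (simp add: sum_divide_distrib[symmetric])
    moreover have "sup_norm V z = 1"
    proof (rule antisym)
      show "sup_norm V z \<le> 1"
        using M sup_norm_ge[OF fin, of _ y]
        by (intro sup_norm_le[OF fin ne]) (simp add: z_def abs_divide M_def)
      show "1 \<le> sup_norm V z"
        using M sup_norm_ge[OF fin v0(1), of z] v0(2) by (simp add: z_def abs_divide)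
    qed
    ultimately have "z \<in> feasible V"
      by (simp add: feasible_def)
    then have "gamma V E \<le> gamma_x V E z"
      by (rule gamma_le_gamma_x[OF fin])
    also have "gamma_x V E z \<le> gamma_x V E y / M"
    proof (rule gamma_x_le[OF fin])
      show "0 \<le> gamma_x V E y / M"
        using M gamma_x_nonneg[OF fin] by simp
      fix u v
      assume "u \<in> V" "v \<in> V" "E u v"
      then have "\<bar>y u - y v\<bar> / M \<le> gamma_x V E y / M"
        using M gamma_x_ge[OF fin] by (simp add: divide_right_mono)
      then show "\<bar>z u - z v\<bar> \<le> gamma_x V E y / M"
        using M by (simp add: z_def diff_divide_distrib[symmetric] abs_divide)
    qed
    finally show ?thesis
      using M by (simp add: M_def le_divide_eq)
  qed
qed

lemma abs_sub_mean_le: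
  assumes fin: "finite V" and pos: "0 < gamma V E" and a: "a \<in> V"
  shows "\<bar>y a - (\<Sum>v\<in>V. y v) / card V\<bar> \<le> gamma_x V E y / gamma V E"
proof -
  define m where "m = (\<Sum>v\<in>V. y v) / card V"
  have "card V \<noteq> 0"
    using fin a by auto
  then have "(\<Sum>v\<in>V. y v - m) = 0"
    by (simp add: m_def sum_subtractf)
  then have "gamma V E * sup_norm V (\<lambda>v. y v - m) \<le> gamma_x V E (\<lambda>v. y v - m)"
    using a by (intro gamma_mult_sup_norm_le[OF fin]) auto
  then have "gamma V E * \<bar>y a - m\<bar> \<le> gamma_x V E y"
    using sup_norm_ge[OF fin a, of "\<lambda>v. y v - m"] pos
    by (simp add: gamma_x_diff_const order_trans[OF mult_left_mono])
  then show ?thesis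
    using pos by (simp add: m_def le_divide_eq mult.commute)
qed

section \<open>Connected graphs\<close>

lemma relpowp_lipschitz_bound:
  assumes "(E ^^ n) v w" and lip: "\<And>a b. E a b \<Longrightarrow> \<bar>x a - x b\<bar> \<le> g"
  shows "\<bar>x v - x w\<bar> \<le> real n * g"
  using assms(1)
proof (induction n arbitrary: w)
  case 0
  then show ?case
    by simp
next
  case (Suc n)
  from \<open>(E ^^ Suc n) v w\<close> obtain y where y: "(E ^^ n) v y" "E y w"
    by (rule relpowp_Suc_E)
  have "\<bar>x v - x w\<bar> \<le> \<bar>x v - x y\<bar> + \<bar>x y - x w\<bar>"
    by simp
  also have "\<dots> \<le> real n * g + g"
    using Suc.IH[OF y(1)] lip[OF y(2)] by simp
  finally show ?case
    by (simp add: algebra_simps)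
qed

lemma connected_graph_walk_length_bound:
  assumes fin: "finite V" and conn: "connected_graph V E"
  shows "\<exists>N. \<forall>v\<in>V. \<forall>w\<in>V. \<exists>n\<le>N. (E ^^ n) v w"
proof -
  have "\<forall>p\<in>V \<times> V. \<exists>n. (E ^^ n) (fst p) (snd p)"
  proof
    fix p
    assume "p \<in> V \<times> V"
    then have "E\<^sup>*\<^sup>* (fst p) (snd p)"
      using conn by (auto simp: connected_graph_def)
    then show "\<exists>n. (E ^^ n) (fst p) (snd p)"
      by (rule rtranclp_imp_relpowp)
  qed
  then obtain len where len: "\<forall>p\<in>V \<times> V. (E ^^ len p) (fst p) (snd p)"
    by (rule bchoice[THEN exE])
  have "\<forall>v\<in>V. \<forall>w\<in>V. len (v, w) \<le> Max (len ` (V \<times> V)) \<and> (E ^^ len (v, w)) v w"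
    using fin len by (simp add: Max_ge)
  then show ?thesis
    by blast
qed

lemma gamma_pos:
  assumes sg: "simple_graph V E" and cg: "connected_graph V E" and card: "2 \<le> card V"
  shows "0 < gamma V E"
proof -
  have fin: "finite V"
    using sg by (simp add: simple_graph_def)
  have ne: "V \<noteq> {}"
    using card by auto
  obtain N where N: "\<And>v w. v \<in> V \<Longrightarrow> w \<in> V \<Longrightarrow> \<exists>n\<le>N. (E ^^ n) v w"
    using connected_graph_walk_length_bound[OF fin cg] by blast
  have "1 / (real N + 1) \<le> gamma V E"
  proof (rule le_gamma[OF feasible_nonempty[OF card]])
    fix x
    assume "x \<in> feasible V"
    then obtain v w where vw: "v \<in> V" "w \<in> V" "1 \<le> \<bar>x v - x w\<bar>"
      using feasible_spread[OF fin ne] by blast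
    then obtain n where n: "n \<le> N" "(E ^^ n) v w"
      using N by blast
    have edge: "\<bar>x a - x b\<bar> \<le> gamma_x V E x" if "E a b" for a b
      using that sg gamma_x_ge[OF fin] by (simp add: simple_graph_def)
    have "1 \<le> real n * gamma_x V E x"
      using vw(3) relpowp_lipschitz_bound[where x = x, OF n(2) edge] by linarith
    also have "\<dots> \<le> (real N + 1) * gamma_x V E x"
      using n(1) gamma_x_nonneg[OF fin] by (intro mult_right_mono) auto
    finally show "1 / (real N + 1) \<le> gamma_x V E x"
      by (simp add: divide_le_eq mult.commute)
  qed
  moreover have "0 < 1 / (real N + 1)"
    by simp
  ultimately show ?thesis
    by linarith
qed

section \<open>Cartesian products\<close>

lemma PiE_fun_upd_in: "u \<in> PiE I V \<Longrightarrow> j \<in> I \<Longrightarrow> a \<in> V j \<Longrightarrow> u(j := a) \<in> PiE I V"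
  using PiE_fun_upd[of a V j u I] by (simp add: insert_absorb)

lemma finite_prod_vertices: "(\<And>i. i < k \<Longrightarrow> finite (V i)) \<Longrightarrow> finite (prod_vertices k V)"
  unfolding prod_vertices_def by (intro finite_PiE) auto

lemma sum_PiE_fun_upd:
  fixes y :: "('i \<Rightarrow> 'a) \<Rightarrow> real"
  assumes "j \<in> I"
  shows "(\<Sum>u\<in>PiE I V. \<Sum>a\<in>V j. y (u(j := a))) = card (V j) * (\<Sum>u\<in>PiE I V. y u)"
proof -
  let ?P = "PiE I V"
  define swap where "swap p = ((fst p)(j := snd p), fst p j)" for p :: "('i \<Rightarrow> 'a) \<times> 'a"
  have swap_swap: "swap (swap p) = p" for p
    by (simp add: swap_def)
  have "swap ` (?P \<times> V j) \<subseteq> ?P \<times> V j"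
    using assms by (auto simp: swap_def PiE_fun_upd_in PiE_mem)
  then have bij: "bij_betw swap (?P \<times> V j) (?P \<times> V j)"
    by (intro bij_betw_byWitness[where f' = swap]) (auto simp: swap_swap)
  have "(\<Sum>u\<in>?P. \<Sum>a\<in>V j. y (u(j := a))) = (\<Sum>p\<in>?P \<times> V j. y (fst (swap p)))"
    by (simp add: sum.cartesian_product swap_def case_prod_beta)
  also have "\<dots> = (\<Sum>p\<in>?P \<times> V j. y (fst p))"
    by (rule sum.reindex_bij_betw[OF bij])
  also have "\<dots> = card (V j) * (\<Sum>u\<in>?P. y u)"
    by (simp add: sum.cartesian_product' sum_distrib_left)
  finally show ?thesis .
qed

lemma sum_PiE_coord:
  fixes f :: "'a \<Rightarrow> real"
  assumes "j \<in> I"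
  shows "card (V j) * (\<Sum>u\<in>PiE I V. f (u j)) = card (PiE I V) * (\<Sum>a\<in>V j. f a)"
  using sum_PiE_fun_upd[OF assms, of "\<lambda>u. f (u j)" V] by (simp add: sum_constant)

lemma two_le_card_prod_vertices:
  assumes "1 \<le> k" and "\<And>i. i < k \<Longrightarrow> 2 \<le> card (V i)"
  shows "2 \<le> card (prod_vertices k V)"
proof -
  have "(2::nat) \<le> 2 ^ k"
    using power_increasing[OF assms(1), of "2::nat"] by simp
  also have "\<dots> = (\<Prod>i<k. 2)"
    by simp
  also have "\<dots> \<le> (\<Prod>i<k. card (V i))"
    using assms(2) by (intro prod_mono) auto
  finally show ?thesis
    by (simp add: prod_vertices_def card_PiE)
qed

lemma prod_edgesE:
  assumes "prod_edges k V E u w"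
  obtains i where "i < k" "E i (u i) (w i)" "\<And>l. l \<noteq> i \<Longrightarrow> u l = w l"
    "u \<in> prod_vertices k V" "w \<in> prod_vertices k V"
proof -
  obtain i where i: "i < k" "E i (u i) (w i)" "\<forall>l<k. l \<noteq> i \<longrightarrow> u l = w l"
    and uw: "u \<in> PiE {..<k} V" "w \<in> PiE {..<k} V"
    using assms by (auto simp: prod_edges_def prod_vertices_def)
  have "u l = w l" if "l \<noteq> i" for l
    using i(3) that uw by (cases "l < k") (auto simp: PiE_def extensional_def)
  with i uw that show thesis
    by (simp add: prod_vertices_def)
qed

lemma prod_edges_fun_updI:
  "u \<in> prod_vertices k V \<Longrightarrow> i < k \<Longrightarrow> a \<in> V i \<Longrightarrow> b \<in> V i \<Longrightarrow> E i a b
    \<Longrightarrow> prod_edges k V E (u(i := a)) (u(i := b))"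
  by (auto simp: prod_edges_def prod_vertices_def PiE_fun_upd_in)

lemma prod_edges_fun_upd:
  assumes "prod_edges k V E u w" "j < k" "a \<in> V j"
  shows "u(j := a) = w(j := a) \<or> prod_edges k V E (u(j := a)) (w(j := a))"
  using assms(1)
proof (rule prod_edgesE)
  fix i
  assume i: "i < k" "E i (u i) (w i)" "\<And>l. l \<noteq> i \<Longrightarrow> u l = w l"
    and uw: "u \<in> prod_vertices k V" "w \<in> prod_vertices k V"
  show ?thesis
  proof (cases "i = j")
    case True
    then show ?thesis
      using i(3) by auto
  next
    case False
    have "u(j := a) \<in> prod_vertices k V" "w(j := a) \<in> prod_vertices k V"
      using uw assms(2,3) by (simp_all add: prod_vertices_def PiE_fun_upd_in)
    moreover have "E i ((u(j := a)) i) ((w(j := a)) i)"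
      using False i(2) by simp
    moreover have "(u(j := a)) l = (w(j := a)) l" if "l \<noteq> i" for l
      using i(3)[OF that] by simp
    ultimately show ?thesis
      unfolding prod_edges_def using i(1) by blast
  qed
qed

section \<open>Averaging over coordinates\<close>

definition edge_lipschitz :: "('b \<Rightarrow> 'b \<Rightarrow> bool) \<Rightarrow> real \<Rightarrow> ('b \<Rightarrow> real) \<Rightarrow> bool" where
  "edge_lipschitz E t y \<longleftrightarrow> 0 \<le> t \<and> (\<forall>u w. E u w \<longrightarrow> \<bar>y u - y w\<bar> \<le> t)"

definition coord_mean :: "(nat \<Rightarrow> 'a set) \<Rightarrow> nat \<Rightarrow> ((nat \<Rightarrow> 'a) \<Rightarrow> real) \<Rightarrow> (nat \<Rightarrow> 'a) \<Rightarrow> real"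
  where "coord_mean V j y u = (\<Sum>a\<in>V j. y (u(j := a))) / card (V j)"

primrec partial_mean :: "(nat \<Rightarrow> 'a set) \<Rightarrow> ((nat \<Rightarrow> 'a) \<Rightarrow> real) \<Rightarrow> nat \<Rightarrow> (nat \<Rightarrow> 'a) \<Rightarrow> real"
  where
    "partial_mean V x 0 = x"
  | "partial_mean V x (Suc i) = coord_mean V i (partial_mean V x i)"

lemma sum_coord_mean:
  assumes "j < k" "finite (V j)" "V j \<noteq> {}"
  shows "(\<Sum>u\<in>prod_vertices k V. coord_mean V j y u) = (\<Sum>u\<in>prod_vertices k V. y u)"
proof -
  have "(\<Sum>u\<in>prod_vertices k V. coord_mean V j y u)
      = (\<Sum>u\<in>PiE {..<k} V. \<Sum>a\<in>V j. y (u(j := a))) / card (V j)"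
    unfolding coord_mean_def prod_vertices_def by (rule sum_divide_distrib[symmetric])
  also have "\<dots> = (\<Sum>u\<in>prod_vertices k V. y u)"
    using sum_PiE_fun_upd[of j "{..<k}" y V] assms by (simp add: prod_vertices_def)
  finally show ?thesis .
qed

lemma edge_lipschitz_coord_mean:
  assumes j: "j < k" and lip: "edge_lipschitz (prod_edges k V E) t y"
  shows "edge_lipschitz (prod_edges k V E) t (coord_mean V j y)"
  unfolding edge_lipschitz_def
proof (intro conjI allI impI)
  show t: "0 \<le> t"
    using lip by (simp add: edge_lipschitz_def)
  fix u w
  assume uw: "prod_edges k V E u w"
  have "\<bar>y (u(j := a)) - y (w(j := a))\<bar> \<le> t" if "a \<in> V j" for a
    using prod_edges_fun_upd[OF uw j that] lip t by (auto simp: edge_lipschitz_def)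
  then have "\<bar>\<Sum>a\<in>V j. y (u(j := a)) - y (w(j := a))\<bar> \<le> (\<Sum>a\<in>V j. t)"
    by (rule order_trans[OF sum_abs sum_mono])
  then have "\<bar>\<Sum>a\<in>V j. y (u(j := a)) - y (w(j := a))\<bar> / card (V j) \<le> t"
    using t by (cases "card (V j) = 0") (auto simp: divide_le_eq mult.commute)
  moreover have "coord_mean V j y u - coord_mean V j y w
      = (\<Sum>a\<in>V j. y (u(j := a)) - y (w(j := a))) / card (V j)"
    by (simp add: coord_mean_def sum_subtractf diff_divide_distrib)
  ultimately show "\<bar>coord_mean V j y u - coord_mean V j y w\<bar> \<le> t"
    by simp
qed

lemma edge_lipschitz_partial_mean:
  "i \<le> k \<Longrightarrow> edge_lipschitz (prod_edges k V E) t x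
    \<Longrightarrow> edge_lipschitz (prod_edges k V E) t (partial_mean V x i)"
  by (induction i) (auto intro: edge_lipschitz_coord_mean)

lemma sum_partial_mean:
  assumes "\<And>i. i < k \<Longrightarrow> finite (V i) \<and> V i \<noteq> {}"
  shows "i \<le> k \<Longrightarrow> (\<Sum>u\<in>prod_vertices k V. partial_mean V x i u) = (\<Sum>u\<in>prod_vertices k V. x u)"
  by (induction i) (auto simp: sum_coord_mean assms)

lemma partial_mean_cong:
  "i \<le> k \<Longrightarrow> u \<in> prod_vertices k V \<Longrightarrow> w \<in> prod_vertices k V \<Longrightarrow> (\<And>l. i \<le> l \<Longrightarrow> u l = w l)
    \<Longrightarrow> partial_mean V x i u = partial_mean V x i w"
proof (induction i arbitrary: u w)
  case 0
  then have "u = w"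
    by auto
  then show ?case
    by simp
next
  case (Suc i)
  have "partial_mean V x i (u(i := a)) = partial_mean V x i (w(i := a))" if "a \<in> V i" for a
    using Suc.prems that by (intro Suc.IH) (auto simp: prod_vertices_def PiE_fun_upd_in)
  then show ?case
    by (simp add: coord_mean_def)
qed

lemma partial_mean_all_coords:
  assumes "\<And>i. i < k \<Longrightarrow> finite (V i) \<and> V i \<noteq> {}" and u: "u \<in> prod_vertices k V"
  shows "partial_mean V x k u = (\<Sum>w\<in>prod_vertices k V. x w) / card (prod_vertices k V)"
proof -
  let ?P = "prod_vertices k V"
  have "finite ?P"
    using assms(1) by (simp add: finite_prod_vertices)
  with u have card: "card ?P \<noteq> 0"
    by auto
  have "partial_mean V x k w = partial_mean V x k u" if "w \<in> ?P" for w
    using that u by (intro partial_mean_cong) (auto simp: prod_vertices_def PiE_def extensional_def)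
  then have "(\<Sum>w\<in>?P. partial_mean V x k w) = card ?P * partial_mean V x k u"
    by simp
  with sum_partial_mean[OF assms(1) order_refl, where x = x] card show ?thesis
    by (simp add: field_simps)
qed

lemma abs_sub_coord_mean_le:
  assumes i: "i < k" and u: "u \<in> prod_vertices k V" and fin: "finite (V i)"
    and pos: "0 < gamma (V i) (E i)" and lip: "edge_lipschitz (prod_edges k V E) t y"
  shows "\<bar>y u - coord_mean V i y u\<bar> \<le> t / gamma (V i) (E i)"
proof -
  define f where "f a = y (u(i := a))" for a
  have "u i \<in> V i"
    using u i by (auto simp: prod_vertices_def)
  then have "\<bar>f (u i) - (\<Sum>a\<in>V i. f a) / card (V i)\<bar> \<le> gamma_x (V i) (E i) f / gamma (V i) (E i)"
    by (rule abs_sub_mean_le[OF fin pos])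
  also have "\<dots> \<le> t / gamma (V i) (E i)"
  proof -
    have "gamma_x (V i) (E i) f \<le> t"
      using lip prod_edges_fun_updI[OF u i]
      by (intro gamma_x_le[OF fin]) (auto simp: edge_lipschitz_def f_def)
    then show ?thesis
      using pos by (simp add: divide_right_mono)
  qed
  finally show ?thesis
    by (simp add: f_def coord_mean_def)
qed

lemma abs_sub_partial_mean_le:
  assumes factors: "\<And>i. i < k \<Longrightarrow> finite (V i) \<and> 0 < gamma (V i) (E i)"
    and lip: "edge_lipschitz (prod_edges k V E) t x" and u: "u \<in> prod_vertices k V"
  shows "i \<le> k \<Longrightarrow> \<bar>x u - partial_mean V x i u\<bar> \<le> (\<Sum>j<i. t / gamma (V j) (E j))"
proof (induction i)
  case 0
  then show ?case
    by simp
next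
  case (Suc i)
  then have i: "i < k"
    by simp
  have "\<bar>partial_mean V x i u - partial_mean V x (Suc i) u\<bar> \<le> t / gamma (V i) (E i)"
    using i u factors[OF i] edge_lipschitz_partial_mean[OF _ lip, of i]
    by (simp add: abs_sub_coord_mean_le)
  with Suc.IH i show ?case
    by simp
qed

lemma gamma_x_prod_ge:
  assumes factors: "\<And>i. i < k \<Longrightarrow> finite (V i) \<and> V i \<noteq> {} \<and> 0 < gamma (V i) (E i)"
    and x: "x \<in> feasible (prod_vertices k V)"
  shows "1 / (\<Sum>i<k. 1 / gamma (V i) (E i)) \<le> gamma_x (prod_vertices k V) (prod_edges k V E) x"
proof -
  let ?P = "prod_vertices k V"
  let ?S = "\<Sum>i<k. 1 / gamma (V i) (E i)"
  define t where "t = gamma_x ?P (prod_edges k V E) x"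
  have fin: "finite ?P"
    using factors by (simp add: finite_prod_vertices)
  have ne: "?P \<noteq> {}"
    using factors by (auto simp: prod_vertices_def PiE_eq_empty_iff)
  have lip: "edge_lipschitz (prod_edges k V E) t x"
    unfolding edge_lipschitz_def t_def
  proof (intro conjI allI impI gamma_x_nonneg[OF fin])
    fix u w
    assume uw: "prod_edges k V E u w"
    then have "u \<in> ?P" "w \<in> ?P"
      by (auto elim: prod_edgesE)
    with uw show "\<bar>x u - x w\<bar> \<le> gamma_x ?P (prod_edges k V E) x"
      by (simp add: gamma_x_ge[OF fin])
  qed
  obtain u where u: "u \<in> ?P" "\<bar>x u\<bar> = 1"
    using sup_norm_attained[OF fin ne, of x] x by (auto simp: feasible_def)
  have "partial_mean V x k u = 0"
    using partial_mean_all_coords[of k V u x] factors u(1) x by (simp add: feasible_def)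
  then have "1 \<le> (\<Sum>j<k. t / gamma (V j) (E j))"
    using abs_sub_partial_mean_le[OF _ lip u(1) order_refl] factors u(2) by simp
  also have "\<dots> = t * ?S"
    by (simp add: sum_distrib_left)
  finally have "1 \<le> t * ?S" .
  have "0 < ?S"
  proof (rule ccontr)
    assume "\<not> 0 < ?S"
    with gamma_x_nonneg[OF fin] have "t * ?S \<le> 0"
      by (simp add: t_def mult_nonneg_nonpos)
    with \<open>1 \<le> t * ?S\<close> show False
      by simp
  qed
  with \<open>1 \<le> t * ?S\<close> show ?thesis
    by (simp add: t_def divide_le_eq mult.commute)
qed

section \<open>Combining witnesses of the factors\<close>

lemma feasible_coord_combination:
  assumes fin: "\<And>i. i < k \<Longrightarrow> finite (V i)"
    and Y: "\<And>i. i < k \<Longrightarrow> Y i \<in> feasible (V i)"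
    and peak: "\<And>i. i < k \<Longrightarrow> v i \<in> V i \<and> Y i (v i) = 1"
    and lam: "\<And>i. i < k \<Longrightarrow> 0 \<le> lam i" and lam_sum: "(\<Sum>i<k. lam i) = 1"
  shows "(\<lambda>u. \<Sum>i<k. lam i * Y i (u i)) \<in> feasible (prod_vertices k V)"
proof -
  let ?P = "prod_vertices k V"
  let ?x = "\<lambda>u. \<Sum>i<k. lam i * Y i (u i)"
  have finP: "finite ?P"
    using fin by (rule finite_prod_vertices)
  have "(\<Sum>u\<in>?P. Y i (u i)) = 0" if i: "i < k" for i
  proof -
    have "card (V i) \<noteq> 0"
      using fin[OF i] peak[OF i] by auto
    moreover have "(\<Sum>a\<in>V i. Y i a) = 0"
      using Y[OF i] by (simp add: feasible_def)
    ultimately show ?thesis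
      using sum_PiE_coord[of i "{..<k}" V "Y i"] i by (simp add: prod_vertices_def)
  qed
  then have "(\<Sum>u\<in>?P. ?x u) = 0"
    by (subst sum.swap) (simp add: sum_distrib_left[symmetric])
  moreover have "sup_norm ?P ?x = 1"
  proof (rule antisym)
    have "\<bar>?x u\<bar> \<le> 1" if u: "u \<in> ?P" for u
    proof -
      have "\<bar>Y i (u i)\<bar> \<le> 1" if i: "i < k" for i
        using sup_norm_ge[OF fin[OF i], of "u i" "Y i"] Y[OF i] u i
        by (auto simp: feasible_def prod_vertices_def)
      then have "\<bar>?x u\<bar> \<le> (\<Sum>i<k. lam i)"
        using lam by (intro order_trans[OF sum_abs sum_mono]) (simp add: abs_mult mult_left_le)
      with lam_sum show ?thesis
        by simp
    qed
    moreover have "restrict v {..<k} \<in> ?P"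
      using peak by (simp add: prod_vertices_def)
    ultimately show "sup_norm ?P ?x \<le> 1"
      by (intro sup_norm_le[OF finP]) auto
    have "?x (restrict v {..<k}) = 1"
      using peak lam_sum by simp
    then show "1 \<le> sup_norm ?P ?x"
      using sup_norm_ge[OF finP \<open>restrict v {..<k} \<in> ?P\<close>, of ?x] by simp
  qed
  ultimately show ?thesis
    by (simp add: feasible_def)
qed

lemma gamma_x_coord_combination_le:
  assumes fin: "\<And>i. i < k \<Longrightarrow> finite (V i)" and lam: "\<And>i. i < k \<Longrightarrow> 0 \<le> lam i"
    and bound: "\<And>i. i < k \<Longrightarrow> lam i * gamma_x (V i) (E i) (Y i) \<le> c" and "0 \<le> c"
  shows "gamma_x (prod_vertices k V) (prod_edges k V E) (\<lambda>u. \<Sum>i<k. lam i * Y i (u i)) \<le> c"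
proof (rule gamma_x_le[OF finite_prod_vertices[OF fin] \<open>0 \<le> c\<close>])
  fix u w
  assume "prod_edges k V E u w"
  then obtain i where i: "i < k" "E i (u i) (w i)" "\<And>l. l \<noteq> i \<Longrightarrow> u l = w l"
    and uw: "u \<in> prod_vertices k V" "w \<in> prod_vertices k V"
    by (rule prod_edgesE) blast
  have "(\<Sum>l<k. lam l * Y l (u l)) - (\<Sum>l<k. lam l * Y l (w l))
      = (\<Sum>l<k. lam l * (Y l (u l) - Y l (w l)))"
    by (simp add: sum_subtractf right_diff_distrib)
  also have "\<dots> = (\<Sum>l<k. if l = i then lam i * (Y i (u i) - Y i (w i)) else 0)"
    by (rule sum.cong) (auto simp: i(3))
  also have "\<dots> = lam i * (Y i (u i) - Y i (w i))"
    using i(1) by simp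
  finally have diff: "\<bar>(\<Sum>l<k. lam l * Y l (u l)) - (\<Sum>l<k. lam l * Y l (w l))\<bar>
      = lam i * \<bar>Y i (u i) - Y i (w i)\<bar>"
    using lam[OF i(1)] by (simp add: abs_mult)
  have "u i \<in> V i" "w i \<in> V i"
    using uw i(1) by (auto simp: prod_vertices_def)
  then have "\<bar>Y i (u i) - Y i (w i)\<bar> \<le> gamma_x (V i) (E i) (Y i)"
    using i(2) by (intro gamma_x_ge[OF fin[OF i(1)]])
  then have "lam i * \<bar>Y i (u i) - Y i (w i)\<bar> \<le> c"
    by (rule order_trans[OF mult_left_mono[OF _ lam[OF i(1)]] bound[OF i(1)]])
  with diff show "\<bar>(\<Sum>l<k. lam l * Y l (u l)) - (\<Sum>l<k. lam l * Y l (w l))\<bar> \<le> c"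
    by simp
qed

lemma gamma_prod_le_witnesses:
  assumes k: "1 \<le> k" and fin: "\<And>i. i < k \<Longrightarrow> finite (V i)"
    and Y: "\<And>i. i < k \<Longrightarrow> Y i \<in> feasible (V i)"
    and peak: "\<And>i. i < k \<Longrightarrow> v i \<in> V i \<and> Y i (v i) = 1"
    and pos: "\<And>i. i < k \<Longrightarrow> 0 < gamma_x (V i) (E i) (Y i)"
  shows "gamma (prod_vertices k V) (prod_edges k V E) \<le> 1 / (\<Sum>i<k. 1 / gamma_x (V i) (E i) (Y i))"
proof -
  define g where "g i = gamma_x (V i) (E i) (Y i)" for i
  define S where "S = (\<Sum>i<k. 1 / g i)"
  have "0 < S"
    unfolding S_def g_def using k pos by (intro sum_pos) (auto simp: lessThan_empty_iff)
  define lam where "lam i = (1 / g i) / S" for i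
  have lam: "0 \<le> lam i" "lam i * g i = 1 / S" if "i < k" for i
    using pos[OF that] \<open>0 < S\<close> by (simp_all add: lam_def g_def)
  have "(\<Sum>i<k. lam i) = (\<Sum>i<k. 1 / g i) / S"
    unfolding lam_def by (rule sum_divide_distrib[symmetric])
  also have "\<dots> = 1"
    using \<open>0 < S\<close> by (simp add: S_def)
  finally have feas: "(\<lambda>u. \<Sum>i<k. lam i * Y i (u i)) \<in> feasible (prod_vertices k V)"
    using fin Y peak lam by (intro feasible_coord_combination) auto
  have "gamma (prod_vertices k V) (prod_edges k V E)
      \<le> gamma_x (prod_vertices k V) (prod_edges k V E) (\<lambda>u. \<Sum>i<k. lam i * Y i (u i))"
    using fin by (intro gamma_le_gamma_x[OF finite_prod_vertices feas])
  also have "\<dots> \<le> 1 / S"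
    using fin lam \<open>0 < S\<close> by (intro gamma_x_coord_combination_le) (auto simp: g_def)
  finally show ?thesis
    by (simp add: S_def g_def)
qed

lemma inverse_sum_inverse_le:
  fixes a b :: "'i \<Rightarrow> real"
  assumes "finite I" "I \<noteq> {}" and r: "0 < r" and ab: "\<And>i. i \<in> I \<Longrightarrow> 0 < a i \<and> a i \<le> r * b i"
  shows "1 / (\<Sum>i\<in>I. 1 / a i) \<le> r * (1 / (\<Sum>i\<in>I. 1 / b i))"
proof -
  have b: "0 < b i" if "i \<in> I" for i
  proof -
    have "0 < r * b i"
      using ab[OF that] by linarith
    then show ?thesis
      using r by (rule zero_less_mult_pos)
  qed
  have "(\<Sum>i\<in>I. 1 / b i) / r = (\<Sum>i\<in>I. 1 / (r * b i))"
    by (simp add: sum_divide_distrib mult.commute)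
  also have "\<dots> \<le> (\<Sum>i\<in>I. 1 / a i)"
    using ab by (intro sum_mono) (simp add: frac_le)
  finally have "(\<Sum>i\<in>I. 1 / b i) / r \<le> (\<Sum>i\<in>I. 1 / a i)" .
  moreover have "0 < (\<Sum>i\<in>I. 1 / b i)"
    using assms(1,2) b by (intro sum_pos) auto
  moreover have "0 < (\<Sum>i\<in>I. 1 / a i)"
    using assms(1,2) ab by (intro sum_pos) auto
  ultimately show ?thesis
    using r by (simp add: field_simps)
qed

lemma gamma_prod_le:
  assumes k: "1 \<le> k"
    and factors: "\<And>i. i < k \<Longrightarrow> finite (V i) \<and> 2 \<le> card (V i) \<and> 0 < gamma (V i) (E i)"
    and r: "1 < r"
  shows "gamma (prod_vertices k V) (prod_edges k V E) \<le> r * (1 / (\<Sum>i<k. 1 / gamma (V i) (E i)))"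
proof -
  have "\<forall>i\<in>{..<k}. \<exists>y. y \<in> feasible (V i) \<and> gamma_x (V i) (E i) y < r * gamma (V i) (E i)
      \<and> (\<exists>w\<in>V i. y w = 1)"
  proof
    fix i
    assume "i \<in> {..<k}"
    then have "finite (V i)" "2 \<le> card (V i)" "0 < gamma (V i) (E i)"
      using factors by auto
    then have "\<exists>y\<in>feasible (V i). gamma_x (V i) (E i) y < r * gamma (V i) (E i) \<and> (\<exists>w\<in>V i. y w = 1)"
      using r by (intro gamma_less_imp_normalized_witness feasible_nonempty) auto
    then show "\<exists>y. y \<in> feasible (V i) \<and> gamma_x (V i) (E i) y < r * gamma (V i) (E i)
        \<and> (\<exists>w\<in>V i. y w = 1)"
      by blast
  qed
  then obtain Y where "\<forall>i\<in>{..<k}. Y i \<in> feasible (V i)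
      \<and> gamma_x (V i) (E i) (Y i) < r * gamma (V i) (E i) \<and> (\<exists>w\<in>V i. Y i w = 1)"
    by (rule bchoice[THEN exE]) blast
  then obtain v where Y: "\<And>i. i < k \<Longrightarrow> Y i \<in> feasible (V i)"
    and Y_less: "\<And>i. i < k \<Longrightarrow> gamma_x (V i) (E i) (Y i) < r * gamma (V i) (E i)"
    and peak: "\<And>i. i < k \<Longrightarrow> v i \<in> V i \<and> Y i (v i) = 1"
    by (metis lessThan_iff)
  have pos: "0 < gamma_x (V i) (E i) (Y i)" if "i < k" for i
    using gamma_le_gamma_x[of "V i" "Y i" "E i"] factors[OF that] Y[OF that] by simp
  have "gamma (prod_vertices k V) (prod_edges k V E) \<le> 1 / (\<Sum>i<k. 1 / gamma_x (V i) (E i) (Y i))"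
    using k factors Y peak pos by (intro gamma_prod_le_witnesses) auto
  also have "\<dots> \<le> r * (1 / (\<Sum>i<k. 1 / gamma (V i) (E i)))"
    using k r pos Y_less by (intro inverse_sum_inverse_le) (auto simp: lessThan_empty_iff less_imp_le)
  finally show ?thesis .
qed

theorem theorem5p2:
  fixes k :: nat and V :: "nat \<Rightarrow> 'a set" and E :: "nat \<Rightarrow> 'a \<Rightarrow> 'a \<Rightarrow> bool"
  assumes "k \<ge> 1"
    and "\<And>i. i < k \<Longrightarrow> simple_graph (V i) (E i)"
    and "\<And>i. i < k \<Longrightarrow> connected_graph (V i) (E i)"
    and "\<And>i. i < k \<Longrightarrow> card (V i) \<ge> 2"
  shows "gamma (prod_vertices k V) (prod_edges k V E)
           = 1 / (\<Sum>i<k. 1 / gamma (V i) (E i))"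
proof (rule antisym)
  have factors: "finite (V i) \<and> 2 \<le> card (V i) \<and> V i \<noteq> {} \<and> 0 < gamma (V i) (E i)"
    if "i < k" for i
    using assms(2-4)[OF that] gamma_pos[OF assms(2-4)[OF that]] by (auto simp: simple_graph_def)
  have "feasible (prod_vertices k V) \<noteq> {}"
    using assms(1,4) by (intro feasible_nonempty two_le_card_prod_vertices)
  then show "1 / (\<Sum>i<k. 1 / gamma (V i) (E i)) \<le> gamma (prod_vertices k V) (prod_edges k V E)"
    using factors by (intro le_gamma gamma_x_prod_ge) auto
  show "gamma (prod_vertices k V) (prod_edges k V E) \<le> 1 / (\<Sum>i<k. 1 / gamma (V i) (E i))"
  proof (rule field_le_mult_one_interval)
    fix z :: real
    assume "0 < z" "z < 1"
    then have "gamma (prod_vertices k V) (prod_edges k V E)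
        \<le> (1 / z) * (1 / (\<Sum>i<k. 1 / gamma (V i) (E i)))"
      using assms(1) factors by (intro gamma_prod_le) auto
    then have "z * gamma (prod_vertices k V) (prod_edges k V E)
        \<le> z * ((1 / z) * (1 / (\<Sum>i<k. 1 / gamma (V i) (E i))))"
      using \<open>0 < z\<close> by (intro mult_left_mono) auto
    with \<open>0 < z\<close> show "z * gamma (prod_vertices k V) (prod_edges k V E)
        \<le> 1 / (\<Sum>i<k. 1 / gamma (V i) (E i))"
      by simp
  qed
qed

end
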